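(* Let $G$ be a discrete abelian group, let $X,Y$ be independent finitely supported $G$-valued random variables with $\mathbb{H}(X+Y)-\mathbb{H}(Y)\le\frac1{16}$, and let $\epsilon\in(0,1)$. Let $B=B(\mathrm{LSpec}(Y,\epsilon),4\epsilon)$. Let $Z$ be another finitely supported $G$-valued random variable. Then there is a set $S\subset\operatorname{supp}(X)$ such that $\log|S|\ge \mathbb{H}(Z)-4\,\mathrm{d}[X;Z]-2\log 2$ and $S-S\subset B$.
   Context: $\log$ is natural. $\mathbb{H}(X)=\sum_x p_X(x)\log(1/p_X(x))$ with $p_X(x)=\mathbb{P}(X=x)$. $\mathrm{d}[X;Z]=\mathbb{H}(X'-Z')-\tfrac12\mathbb{H}(X)-\tfrac12\mathbb{H}(Z)$ with $X',Z'$ independent copies of $X,Z$. $\hat G$ is the group of homomorphisms $G\to S^1=\{z\in\mathbb{C}:|z|=1\}$, and for $f\in\ell^1(G)$, $\hat f(\gamma)=\sum_{x\in G}f(x)\overline{\gamma(x)}$. $\mathrm{LSpec}(Y,\epsilon)=\{\gamma\in\hat G:|\hat{p_Y}(\gamma)|^2\ge 1-\epsilon^2/2\}$. For $\Gamma\subset\hat G$ and $\delta\in(0,2]$ (or larger), the Bohr set is $B(\Gamma,\delta)=\{x\in G:|\gamma(x)-1|\le\delta\text{ for all }\gamma\in\Gamma\}$. $S-S=\{s-s':s,s'\in S\}$. *)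

theory Defs
  imports "HOL-Probability.Probability"
begin

text \<open>Finitely supported G-valued random variables are represented by their
  distributions (pmfs with finite support). Independence of two variables is
  encoded by taking the product distribution.\<close>

definition entropy_pmf :: "'a pmf \<Rightarrow> real" where
  "entropy_pmf p = (\<Sum>x\<in>set_pmf p. pmf p x * ln (1 / pmf p x))"

definition sum_dist :: "'a::ab_group_add pmf \<Rightarrow> 'a pmf \<Rightarrow> 'a pmf" where
  "sum_dist p q = map_pmf (\<lambda>(x, y). x + y) (pair_pmf p q)"

definition diff_dist :: "'a::ab_group_add pmf \<Rightarrow> 'a pmf \<Rightarrow> 'a pmf" where
  "diff_dist p q = map_pmf (\<lambda>(x, z). x - z) (pair_pmf p q)"

definition ruzsa_dist :: "'a::ab_group_add pmf \<Rightarrow> 'a pmf \<Rightarrow> real" where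
  "ruzsa_dist p q = entropy_pmf (diff_dist p q) - entropy_pmf p / 2 - entropy_pmf q / 2"

definition characters :: "('a::ab_group_add \<Rightarrow> complex) set" where
  "characters = {\<gamma>. (\<forall>x y. \<gamma> (x + y) = \<gamma> x * \<gamma> y) \<and> (\<forall>x. cmod (\<gamma> x) = 1)}"

definition fourier_pmf :: "'a::ab_group_add pmf \<Rightarrow> ('a \<Rightarrow> complex) \<Rightarrow> complex" where
  "fourier_pmf p \<gamma> = (\<Sum>x\<in>set_pmf p. complex_of_real (pmf p x) * cnj (\<gamma> x))"

definition LSpec :: "'a::ab_group_add pmf \<Rightarrow> real \<Rightarrow> ('a \<Rightarrow> complex) set" where
  "LSpec p \<epsilon> = {\<gamma>\<in>characters. (cmod (fourier_pmf p \<gamma>))\<^sup>2 \<ge> 1 - \<epsilon>\<^sup>2 / 2}"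

definition bohr_set :: "('a \<Rightarrow> complex) set \<Rightarrow> real \<Rightarrow> 'a set" where
  "bohr_set \<Gamma> \<delta> = {x. \<forall>\<gamma>\<in>\<Gamma>. cmod (\<gamma> x - 1) \<le> \<delta>}"

end

theory Submission
  imports Defs
begin

text \<open>Write f_x for the law of x + Y and w for the law of X + Y. Then H(X + Y) - H(Y) is the
  average over x \<sim> X of the relative entropy of f_x to w, which dominates 2 (1 - BC(f_x, w)),
  BC being the Bhattacharyya coefficient. By Markov's inequality the x with BC(f_x, w) \<ge> 15/16
  carry at least half the mass of X, and the triangle inequality for the Hellinger distance gives
  BC(f_x, f_x') \<ge> 3/4 for any two of them; these x form S.

  For \<gamma> in LSpec(Y, \<epsilon>), \<gamma>(Y) has variance 1 - |fourier_pmf pY \<gamma>|^2 \<le> \<epsilon>^2/2 around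
  cnj (fourier_pmf pY \<gamma>); comparing x + Y with x' + Y by Cauchy-Schwarz gives
  |\<gamma>(x) - \<gamma>(x')| \<le> 4 \<epsilon> for x, x' \<in> S.

  The bound on log |S| comes from concavity of entropy: splitting the law of X - Z according to
  whether X \<in> S gives H(X - Z) \<ge> q H(Z) + E, where q = P(X \<in> S) \<ge> 1/2 and E is the entropy
  contribution of the part X \<notin> S, while H(X) \<le> q log |S| + E + log 2.\<close>

section \<open>Sums and differences of independent variables\<close>

lemma sum_dist_eq_bind: "sum_dist p q = bind_pmf p (\<lambda>x. map_pmf ((+) x) q)"
  unfolding sum_dist_def pair_pmf_def
  by (simp add: map_bind_pmf map_return_pmf) (simp add: map_pmf_def)

lemma diff_dist_eq_bind: "diff_dist p q = bind_pmf p (\<lambda>x. map_pmf ((-) x) q)"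
  unfolding diff_dist_def pair_pmf_def
  by (simp add: map_bind_pmf map_return_pmf) (simp add: map_pmf_def)

lemma pmf_sum_dist:
  fixes p q :: "'a::ab_group_add pmf"
  assumes "finite (set_pmf p)"
  shows "pmf (sum_dist p q) z = (\<Sum>x\<in>set_pmf p. pmf p x * pmf q (z - x))"
proof -
  have "pmf (map_pmf ((+) x) q) z = pmf q (z - x)" for x
    using pmf_map_inj'[of "(+) x" q "z - x"] by (simp add: inj_def)
  then show ?thesis
    unfolding sum_dist_eq_bind pmf_bind
    by (subst integral_measure_pmf[OF assms]) (auto simp: mult.commute)
qed

lemma pmf_diff_dist:
  fixes p q :: "'a::ab_group_add pmf"
  assumes "finite (set_pmf p)"
  shows "pmf (diff_dist p q) z = (\<Sum>x\<in>set_pmf p. pmf p x * pmf q (x - z))"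
proof -
  have "pmf (map_pmf ((-) x) q) z = pmf q (x - z)" for x
    using pmf_map_inj'[of "(-) x" q "x - z"] by (simp add: inj_def)
  then show ?thesis
    unfolding diff_dist_eq_bind pmf_bind
    by (subst integral_measure_pmf[OF assms]) (auto simp: mult.commute)
qed

lemma set_pmf_sum_dist: "set_pmf (sum_dist p q) = (\<lambda>(x, y). x + y) ` (set_pmf p \<times> set_pmf q)"
  by (simp add: sum_dist_def)

lemma set_pmf_diff_dist: "set_pmf (diff_dist p q) = (\<lambda>(x, y). x - y) ` (set_pmf p \<times> set_pmf q)"
  by (simp add: diff_dist_def)

lemma add_mem_set_pmf_sum_dist:
  "x \<in> set_pmf p \<Longrightarrow> y \<in> set_pmf q \<Longrightarrow> x + y \<in> set_pmf (sum_dist p q)"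
  unfolding set_pmf_sum_dist by force

lemma finite_set_pmf_sum_dist:
  "finite (set_pmf p) \<Longrightarrow> finite (set_pmf q) \<Longrightarrow> finite (set_pmf (sum_dist p q))"
  by (simp add: set_pmf_sum_dist)

lemma finite_set_pmf_diff_dist:
  "finite (set_pmf p) \<Longrightarrow> finite (set_pmf q) \<Longrightarrow> finite (set_pmf (diff_dist p q))"
  by (simp add: set_pmf_diff_dist)

lemma sum_reindex_nonzero:
  fixes K :: "'b \<Rightarrow> 'c::comm_monoid_add"
  assumes "finite V" "finite A"
    and "\<And>a. a \<in> A \<Longrightarrow> K a \<noteq> 0 \<Longrightarrow> \<psi> a \<in> V \<and> \<phi> (\<psi> a) = a"
    and "\<And>v. v \<in> V \<Longrightarrow> K (\<phi> v) \<noteq> 0 \<Longrightarrow> \<phi> v \<in> A \<and> \<psi> (\<phi> v) = v"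
  shows "(\<Sum>v\<in>V. K (\<phi> v)) = (\<Sum>a\<in>A. K a)"
  by (rule sum.reindex_bij_witness_not_neutral[where S'="{v\<in>V. K (\<phi> v) = 0}"
        and T'="{a\<in>A. K a = 0}" and i=\<psi> and j=\<phi>]) (use assms in auto)

lemma sum_translate_support:
  fixes K :: "'a::ab_group_add \<Rightarrow> 'c::comm_monoid_add"
  assumes "finite T" "finite B" "\<And>y. y \<in> B \<Longrightarrow> x + y \<in> T" "\<And>y. y \<notin> B \<Longrightarrow> K y = 0"
  shows "(\<Sum>z\<in>T. K (z - x)) = (\<Sum>y\<in>B. K y)"
  by (rule sum_reindex_nonzero[where \<psi>="(+) x"]) (use assms in auto)

lemma sum_pmf_translate_eq_1:
  fixes q :: "'a::ab_group_add pmf"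
  assumes "finite (set_pmf q)" "finite T" "\<And>y. y \<in> set_pmf q \<Longrightarrow> x + y \<in> T"
  shows "(\<Sum>z\<in>T. pmf q (z - x)) = 1"
  using sum_pmf_eq_1[OF assms(1)]
  by (subst sum_translate_support[where B="set_pmf q"]) (use assms in \<open>auto simp: set_pmf_iff\<close>)

lemma pmf_sum_dist_pos:
  "x \<in> set_pmf p \<Longrightarrow> 0 < pmf q (z - x) \<Longrightarrow> 0 < pmf (sum_dist p q) (z :: 'a::ab_group_add)"
  using add_mem_set_pmf_sum_dist[of x p "z - x" q] by (simp add: pmf_positive set_pmf_iff)

lemma sum_sum_dist_translate:
  fixes K :: "'a::ab_group_add \<Rightarrow> 'c::comm_monoid_add"
  assumes "finite (set_pmf p)" "finite (set_pmf q)" "x \<in> set_pmf p" "\<And>y. y \<notin> set_pmf q \<Longrightarrow> K y = 0"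
  shows "(\<Sum>z\<in>set_pmf (sum_dist p q). K (z - x)) = (\<Sum>y\<in>set_pmf q. K y)"
  by (rule sum_translate_support)
    (use assms finite_set_pmf_sum_dist add_mem_set_pmf_sum_dist in auto)

section \<open>Entropy of nonnegative weights\<close>

text \<open>For the mass m = sum g V this is m times the entropy of the normalised weights g / m:
  the entropy functional extended 1-homogeneously to nonnegative weights.\<close>
definition scaled_entropy :: "'b set \<Rightarrow> ('b \<Rightarrow> real) \<Rightarrow> real" where
  "scaled_entropy V g = (\<Sum>v\<in>V. g v * ln (sum g V / g v))"

lemma scaled_entropy_cong:
  "(\<And>v. v \<in> V \<Longrightarrow> f v = g v) \<Longrightarrow> scaled_entropy V f = scaled_entropy V g"
  unfolding scaled_entropy_def by (simp cong: sum.cong)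

lemma scaled_entropy_reindex:
  assumes "finite V" "finite A"
    and "\<And>a. a \<in> A \<Longrightarrow> F a \<noteq> 0 \<Longrightarrow> \<psi> a \<in> V \<and> \<phi> (\<psi> a) = a"
    and "\<And>v. v \<in> V \<Longrightarrow> F (\<phi> v) \<noteq> 0 \<Longrightarrow> \<phi> v \<in> A \<and> \<psi> (\<phi> v) = v"
  shows "scaled_entropy V (\<lambda>v. F (\<phi> v)) = scaled_entropy A F"
proof -
  have mass: "(\<Sum>v\<in>V. F (\<phi> v)) = sum F A"
    by (rule sum_reindex_nonzero[OF assms])
  show ?thesis
    unfolding scaled_entropy_def mass
    by (rule sum_reindex_nonzero[where K="\<lambda>t. F t * ln (sum F A / F t)"]) (use assms in auto)
qed

lemma scaled_entropy_scale:
  assumes "0 \<le> c"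
  shows "scaled_entropy V (\<lambda>v. c * g v) = c * scaled_entropy V g"
proof (cases "c = 0")
  case False
  with assms have "0 < c" by simp
  have mass: "sum (\<lambda>v. c * g v) V = c * sum g V" by (simp add: sum_distrib_left)
  have "scaled_entropy V (\<lambda>v. c * g v) = (\<Sum>v\<in>V. c * (g v * ln (sum g V / g v)))"
    unfolding scaled_entropy_def mass using \<open>0 < c\<close> by (simp add: mult.assoc)
  then show ?thesis by (simp add: scaled_entropy_def sum_distrib_left)
qed (simp add: scaled_entropy_def)

lemma scaled_entropy_le_cross_entropy:
  assumes "finite V" and f0: "\<And>v. v \<in> V \<Longrightarrow> 0 \<le> f v" and u0: "\<And>v. v \<in> V \<Longrightarrow> 0 \<le> u v"
    and supp: "\<And>v. v \<in> V \<Longrightarrow> 0 < f v \<Longrightarrow> 0 < u v"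
  shows "scaled_entropy V f \<le> (\<Sum>v\<in>V. f v * ln (sum u V / u v))"
proof -
  define mf M where "mf = sum f V" and "M = sum u V"
  have "0 \<le> mf" "0 \<le> M"
    unfolding mf_def M_def using f0 u0 by (auto intro: sum_nonneg)
  have pointwise: "f v * ln (mf / f v) \<le> f v * ln (M / u v) + (mf * u v / M - f v)"
    if "v \<in> V" for v
  proof (cases "f v = 0")
    case True
    then show ?thesis using \<open>0 \<le> mf\<close> \<open>0 \<le> M\<close> u0[OF that] by simp
  next
    case False
    with that f0 supp have "0 < f v" "0 < u v" by force+
    moreover have "f v \<le> mf" "u v \<le> M"
      unfolding mf_def M_def using that f0 u0 \<open>finite V\<close> by (auto intro: member_le_sum)
    ultimately have pos: "0 < f v" "0 < u v" "0 < mf" "0 < M" by linarith+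
    have "ln (mf * u v / (f v * M)) \<le> mf * u v / (f v * M) - 1"
      using pos by (intro ln_le_minus_one) simp
    then have "f v * ln (mf * u v / (f v * M)) \<le> mf * u v / M - f v"
      using pos by (simp add: field_simps mult_left_mono)
    moreover have "f v * ln (mf / f v) = f v * ln (M / u v) + f v * ln (mf * u v / (f v * M))"
      using pos by (simp add: ln_div ln_mult algebra_simps)
    ultimately show ?thesis by linarith
  qed
  have "(\<Sum>v\<in>V. mf * u v / M - f v) = mf * M / M - mf"
    unfolding M_def mf_def
    by (simp add: sum_subtractf sum_divide_distrib[symmetric] sum_distrib_left)
  also have "\<dots> \<le> 0"
    using \<open>0 \<le> mf\<close> by (cases "M = 0") auto
  finally have "(\<Sum>v\<in>V. mf * u v / M - f v) \<le> 0" .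
  moreover have "scaled_entropy V f \<le> (\<Sum>v\<in>V. f v * ln (M / u v)) + (\<Sum>v\<in>V. mf * u v / M - f v)"
    unfolding scaled_entropy_def mf_def[symmetric] sum.distrib[symmetric]
    by (rule sum_mono) (rule pointwise)
  ultimately show ?thesis unfolding M_def by linarith
qed

lemma scaled_entropy_add_ge:
  assumes "finite V" "\<And>v. v \<in> V \<Longrightarrow> 0 \<le> f v" "\<And>v. v \<in> V \<Longrightarrow> 0 \<le> g v"
  shows "scaled_entropy V f + scaled_entropy V g \<le> scaled_entropy V (\<lambda>v. f v + g v)"
proof -
  let ?L = "\<lambda>v. ln (sum (\<lambda>v. f v + g v) V / (f v + g v))"
  have "scaled_entropy V f \<le> (\<Sum>v\<in>V. f v * ?L v)"
    by (rule scaled_entropy_le_cross_entropy)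
      (use assms in \<open>auto intro: add_nonneg_nonneg add_pos_nonneg\<close>)
  moreover have "scaled_entropy V g \<le> (\<Sum>v\<in>V. g v * ?L v)"
    by (rule scaled_entropy_le_cross_entropy)
      (use assms in \<open>auto intro: add_nonneg_nonneg add_nonneg_pos\<close>)
  moreover have "(\<Sum>v\<in>V. f v * ?L v) + (\<Sum>v\<in>V. g v * ?L v) = scaled_entropy V (\<lambda>v. f v + g v)"
    unfolding scaled_entropy_def by (simp add: sum.distrib[symmetric] distrib_right)
  ultimately show ?thesis by linarith
qed

lemma scaled_entropy_sum_ge:
  assumes "finite V" "finite I" "\<And>i v. i \<in> I \<Longrightarrow> v \<in> V \<Longrightarrow> 0 \<le> g i v"
  shows "(\<Sum>i\<in>I. scaled_entropy V (g i)) \<le> scaled_entropy V (\<lambda>v. \<Sum>i\<in>I. g i v)"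
  using assms(2,3)
proof (induction I rule: finite_induct)
  case empty
  then show ?case by (simp add: scaled_entropy_def)
next
  case (insert i I)
  then have "(\<Sum>j\<in>insert i I. scaled_entropy V (g j))
      \<le> scaled_entropy V (g i) + scaled_entropy V (\<lambda>v. \<Sum>j\<in>I. g j v)"
    by simp
  also have "\<dots> \<le> scaled_entropy V (\<lambda>v. g i v + (\<Sum>j\<in>I. g j v))"
    by (rule scaled_entropy_add_ge) (use assms(1) insert in \<open>auto intro: sum_nonneg\<close>)
  finally show ?case using insert by simp
qed

lemma scaled_entropy_mixture_ge:
  assumes "finite V" "finite I" "\<And>i. i \<in> I \<Longrightarrow> 0 \<le> c i"
    and "\<And>i v. i \<in> I \<Longrightarrow> v \<in> V \<Longrightarrow> 0 \<le> g i v"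
    and "\<And>i. i \<in> I \<Longrightarrow> scaled_entropy V (g i) = e"
  shows "sum c I * e \<le> scaled_entropy V (\<lambda>v. \<Sum>i\<in>I. c i * g i v)"
proof -
  have "sum c I * e = (\<Sum>i\<in>I. scaled_entropy V (\<lambda>v. c i * g i v))"
    using assms(3,5) by (simp add: sum_distrib_right scaled_entropy_scale)
  also have "\<dots> \<le> scaled_entropy V (\<lambda>v. \<Sum>i\<in>I. c i * g i v)"
    by (rule scaled_entropy_sum_ge) (use assms in auto)
  finally show ?thesis .
qed

lemma scaled_entropy_le_ln_card:
  assumes "finite V" "\<And>v. v \<in> V \<Longrightarrow> 0 \<le> g v"
  shows "scaled_entropy V g \<le> sum g V * ln (card V)"
  using scaled_entropy_le_cross_entropy[where u="\<lambda>_. 1", OF assms]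
  by (simp add: sum_distrib_right)

lemma scaled_entropy_pmf:
  assumes "finite V" "set_pmf p \<subseteq> V"
  shows "scaled_entropy V (pmf p) = entropy_pmf p"
proof -
  have "scaled_entropy V (pmf p) = (\<Sum>v\<in>V. pmf p v * ln (1 / pmf p v))"
    using sum_pmf_eq_1[OF assms] by (simp add: scaled_entropy_def)
  also have "\<dots> = entropy_pmf p"
    unfolding entropy_pmf_def
    by (rule sum.mono_neutral_right) (use assms in \<open>auto simp: set_pmf_eq\<close>)
  finally show ?thesis .
qed

lemma sum_ln_inverse_eq_scaled_entropy:
  assumes "finite V" "\<And>v. v \<in> V \<Longrightarrow> 0 < g v"
  shows "(\<Sum>v\<in>V. g v * ln (1 / g v)) = scaled_entropy V g + sum g V * ln (1 / sum g V)"
proof (cases "V = {}")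
  case False
  then have "0 < sum g V" using assms by (simp add: sum_pos)
  then have "g v * ln (1 / g v) = g v * ln (sum g V / g v) + g v * ln (1 / sum g V)"
    if "v \<in> V" for v
    using assms(2)[OF that] by (simp add: ln_div algebra_simps)
  then show ?thesis
    unfolding scaled_entropy_def by (simp add: sum.distrib sum_distrib_right cong: sum.cong)
qed (simp add: scaled_entropy_def)

lemma binary_entropy_le_ln_2:
  fixes q :: real
  assumes "0 \<le> q" "q \<le> 1"
  shows "q * ln (1 / q) + (1 - q) * ln (1 / (1 - q)) \<le> ln 2"
proof -
  define g where "g b = (if b then q else 1 - q)" for b
  have "scaled_entropy UNIV g \<le> sum g UNIV * ln (card (UNIV :: bool set))"
    by (rule scaled_entropy_le_ln_card) (use assms in \<open>auto simp: g_def\<close>)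
  then show ?thesis by (simp add: scaled_entropy_def g_def UNIV_bool)
qed

lemma entropy_pmf_le_partition:
  assumes fin: "finite (set_pmf p)" and S: "S \<subseteq> set_pmf p"
  shows "entropy_pmf p \<le> scaled_entropy S (pmf p) + scaled_entropy (set_pmf p - S) (pmf p) + ln 2"
proof -
  define R q r where "R = set_pmf p - S" and "q = sum (pmf p) S" and "r = sum (pmf p) R"
  have fin_S: "finite S" and fin_R: "finite R"
    using fin S finite_subset unfolding R_def by auto
  have pos: "\<And>x. x \<in> set_pmf p \<Longrightarrow> 0 < pmf p x" by (simp add: pmf_positive)
  have "r = 1 - q" "0 \<le> r"
    using sum.subset_diff[OF S fin, of "pmf p"] sum_pmf_eq_1[OF fin]
    unfolding R_def q_def r_def by (simp_all add: sum_nonneg)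
  then have binary: "q * ln (1 / q) + r * ln (1 / r) \<le> ln 2"
    using binary_entropy_le_ln_2[of q] unfolding q_def by (simp add: sum_nonneg)
  have "entropy_pmf p = (\<Sum>x\<in>S. pmf p x * ln (1 / pmf p x)) + (\<Sum>x\<in>R. pmf p x * ln (1 / pmf p x))"
    unfolding entropy_pmf_def R_def using sum.subset_diff[OF S fin] by (simp add: add.commute)
  also have "\<dots> = scaled_entropy S (pmf p) + scaled_entropy R (pmf p)
      + (q * ln (1 / q) + r * ln (1 / r))"
    using sum_ln_inverse_eq_scaled_entropy[OF fin_S, of "pmf p"]
      sum_ln_inverse_eq_scaled_entropy[OF fin_R, of "pmf p"] pos S
    unfolding R_def q_def r_def by auto
  finally show ?thesis using binary unfolding R_def by linarith
qed

section \<open>Size of a set carrying half the mass of X\<close>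

definition diff_dist_on :: "'a::ab_group_add pmf \<Rightarrow> 'a pmf \<Rightarrow> 'a set \<Rightarrow> 'a \<Rightarrow> real" where
  "diff_dist_on p q A v = (\<Sum>x\<in>A. pmf p x * pmf q (x - v))"

lemma diff_dist_on_nonneg: "0 \<le> diff_dist_on p q A v"
  by (simp add: diff_dist_on_def sum_nonneg)

lemma pmf_diff_dist_eq_on:
  "finite (set_pmf p) \<Longrightarrow> pmf (diff_dist p q) = diff_dist_on p q (set_pmf p)"
  by (simp add: fun_eq_iff pmf_diff_dist diff_dist_on_def)

lemma diff_mem_set_pmf_diff_dist:
  "x \<in> set_pmf p \<Longrightarrow> z \<in> set_pmf q \<Longrightarrow> x - z \<in> set_pmf (diff_dist p q)"
  unfolding set_pmf_diff_dist by force

lemma entropy_le_scaled_entropy_diff_dist_on: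
  fixes p q :: "'a::ab_group_add pmf"
  assumes fin_p: "finite (set_pmf p)" and fin_q: "finite (set_pmf q)" and A: "A \<subseteq> set_pmf p"
  shows "sum (pmf p) A * entropy_pmf q
    \<le> scaled_entropy (set_pmf (diff_dist p q)) (diff_dist_on p q A)"
proof -
  have fin_A: "finite A" using fin_p A finite_subset by blast
  have "scaled_entropy (set_pmf (diff_dist p q)) (\<lambda>v. pmf q (x - v)) = entropy_pmf q"
    if "x \<in> A" for x
  proof -
    from that A have "x \<in> set_pmf p" by blast
    have "scaled_entropy (set_pmf (diff_dist p q)) (\<lambda>v. pmf q (x - v))
        = scaled_entropy (set_pmf q) (pmf q)"
      by (rule scaled_entropy_reindex[where \<psi>="(-) x"])
        (use fin_p fin_q finite_set_pmf_diff_dist diff_mem_set_pmf_diff_dist[OF \<open>x \<in> set_pmf p\<close>]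
          in \<open>auto simp: set_pmf_iff\<close>)
    then show ?thesis using scaled_entropy_pmf[OF fin_q] by simp
  qed
  then show ?thesis
    unfolding diff_dist_on_def
    by (intro scaled_entropy_mixture_ge) (use fin_p fin_q finite_set_pmf_diff_dist fin_A in auto)
qed

lemma scaled_entropy_le_scaled_entropy_diff_dist_on:
  fixes p q :: "'a::ab_group_add pmf"
  assumes fin_p: "finite (set_pmf p)" and fin_q: "finite (set_pmf q)" and A: "A \<subseteq> set_pmf p"
  shows "scaled_entropy A (pmf p) \<le> scaled_entropy (set_pmf (diff_dist p q)) (diff_dist_on p q A)"
proof -
  define V where "V = set_pmf (diff_dist p q)"
  define p_A where "p_A x = (if x \<in> A then pmf p x else 0)" for x
  have fin_V: "finite V" and fin_A: "finite A"
    unfolding V_def using finite_set_pmf_diff_dist[OF fin_p fin_q] fin_p A finite_subset by auto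
  have "diff_dist_on p q A = (\<lambda>v. \<Sum>z\<in>set_pmf q. pmf q z * p_A (v + z))"
  proof
    fix v
    have "(\<Sum>z\<in>set_pmf q. (\<lambda>x. p_A x * pmf q (x - v)) (v + z)) = (\<Sum>x\<in>A. p_A x * pmf q (x - v))"
      by (rule sum_reindex_nonzero[where \<psi>="\<lambda>x. x - v"])
        (use fin_q fin_A in \<open>auto simp: set_pmf_iff p_A_def split: if_splits\<close>)
    then show "diff_dist_on p q A v = (\<Sum>z\<in>set_pmf q. pmf q z * p_A (v + z))"
      unfolding diff_dist_on_def by (simp add: p_A_def mult.commute)
  qed
  moreover have "scaled_entropy V (\<lambda>v. p_A (v + z)) = scaled_entropy A (pmf p)"
    if "z \<in> set_pmf q" for z
  proof -
    have "scaled_entropy V (\<lambda>v. p_A (v + z)) = scaled_entropy A p_A"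
      by (rule scaled_entropy_reindex[where \<psi>="\<lambda>x. x - z"])
        (use fin_V fin_A that A in \<open>auto simp: V_def p_A_def split: if_splits
          intro: diff_mem_set_pmf_diff_dist\<close>)
    also have "\<dots> = scaled_entropy A (pmf p)" by (rule scaled_entropy_cong) (simp add: p_A_def)
    finally show ?thesis .
  qed
  then have "sum (pmf q) (set_pmf q) * scaled_entropy A (pmf p)
      \<le> scaled_entropy V (\<lambda>v. \<Sum>z\<in>set_pmf q. pmf q z * p_A (v + z))"
    by (intro scaled_entropy_mixture_ge) (use fin_V fin_q in \<open>auto simp: p_A_def\<close>)
  ultimately show ?thesis
    using sum_pmf_eq_1[OF fin_q] unfolding V_def by simp
qed

lemma entropy_diff_dist_eq_scaled_entropy:
  assumes "finite (set_pmf p)" "finite (set_pmf q)"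
  shows "entropy_pmf (diff_dist p q)
    = scaled_entropy (set_pmf (diff_dist p q)) (diff_dist_on p q (set_pmf p))"
  using scaled_entropy_pmf[of "set_pmf (diff_dist p q)" "diff_dist p q"]
    finite_set_pmf_diff_dist[OF assms] pmf_diff_dist_eq_on[OF assms(1)] by simp

lemma entropy_le_entropy_diff_dist:
  fixes p q :: "'a::ab_group_add pmf"
  assumes "finite (set_pmf p)" "finite (set_pmf q)"
  shows "entropy_pmf q \<le> entropy_pmf (diff_dist p q)"
    and "entropy_pmf p \<le> entropy_pmf (diff_dist p q)"
  using entropy_le_scaled_entropy_diff_dist_on[OF assms order_refl]
    scaled_entropy_le_scaled_entropy_diff_dist_on[OF assms order_refl]
    sum_pmf_eq_1[OF assms(1)] scaled_entropy_pmf[OF assms(1)]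
  unfolding entropy_diff_dist_eq_scaled_entropy[OF assms] by auto

lemma entropy_diff_dist_ge_partition:
  fixes p q :: "'a::ab_group_add pmf"
  assumes fin_p: "finite (set_pmf p)" and fin_q: "finite (set_pmf q)" and S: "S \<subseteq> set_pmf p"
  shows "sum (pmf p) S * entropy_pmf q + scaled_entropy (set_pmf p - S) (pmf p)
    \<le> entropy_pmf (diff_dist p q)"
proof -
  define R where "R = set_pmf p - S"
  have "diff_dist_on p q (set_pmf p) = (\<lambda>v. diff_dist_on p q S v + diff_dist_on p q R v)"
  proof
    fix v
    show "diff_dist_on p q (set_pmf p) v = diff_dist_on p q S v + diff_dist_on p q R v"
      unfolding diff_dist_on_def R_def
      using sum.subset_diff[OF S fin_p, of "\<lambda>x. pmf p x * pmf q (x - v)"] by linarith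
  qed
  then have "scaled_entropy (set_pmf (diff_dist p q)) (diff_dist_on p q S)
      + scaled_entropy (set_pmf (diff_dist p q)) (diff_dist_on p q R) \<le> entropy_pmf (diff_dist p q)"
    unfolding entropy_diff_dist_eq_scaled_entropy[OF fin_p fin_q]
    by (simp add: scaled_entropy_add_ge finite_set_pmf_diff_dist[OF fin_p fin_q]
        diff_dist_on_nonneg)
  moreover have "R \<subseteq> set_pmf p" unfolding R_def by auto
  ultimately show ?thesis
    using entropy_le_scaled_entropy_diff_dist_on[OF fin_p fin_q S]
      scaled_entropy_le_scaled_entropy_diff_dist_on[OF fin_p fin_q, of R]
    unfolding R_def by linarith
qed

lemma ln_card_ge_of_half_mass:
  fixes pX pZ :: "'a::ab_group_add pmf"
  assumes fin_X: "finite (set_pmf pX)" and fin_Z: "finite (set_pmf pZ)"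
    and S: "S \<subseteq> set_pmf pX" and half: "1 / 2 \<le> sum (pmf pX) S"
  shows "entropy_pmf pZ - 4 * ruzsa_dist pX pZ - 2 * ln 2 \<le> ln (card S)"
proof -
  define q L E where "q = sum (pmf pX) S" and "L = ln (card S)"
    and "E = scaled_entropy (set_pmf pX - S) (pmf pX)"
  define HZ HX HD where "HZ = entropy_pmf pZ" and "HX = entropy_pmf pX"
    and "HD = entropy_pmf (diff_dist pX pZ)"
  have "HZ \<le> HD" "HX \<le> HD"
    unfolding HZ_def HX_def HD_def using entropy_le_entropy_diff_dist[OF fin_X fin_Z] by auto
  have HD_ge: "q * HZ + E \<le> HD"
    unfolding q_def HZ_def E_def HD_def by (rule entropy_diff_dist_ge_partition[OF fin_X fin_Z S])
  have "finite S" using fin_X S finite_subset by blast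
  then have HX_le: "HX \<le> q * L + E + ln 2"
    using entropy_pmf_le_partition[OF fin_X S] scaled_entropy_le_ln_card[of S "pmf pX"]
    unfolding HX_def q_def L_def E_def by simp
  have ruzsa: "4 * ruzsa_dist pX pZ = 4 * HD - 2 * HX - 2 * HZ"
    unfolding ruzsa_dist_def HD_def HX_def HZ_def by simp
  show ?thesis
  proof (cases "L < HZ")
    case True
    then have "1 * (HZ - L) \<le> (2 * q) * (HZ - L)"
      using half unfolding q_def by (intro mult_right_mono) auto
    then have "HZ - L \<le> 2 * (q * HZ) - 2 * (q * L)"
      by (simp add: algebra_simps)
    then show ?thesis
      using HX_le HD_ge \<open>HZ \<le> HD\<close> ruzsa unfolding L_def[symmetric] HZ_def[symmetric] by linarith
  next
    case False
    have "0 \<le> ln (2 :: real)" by simp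
    with False show ?thesis
      using \<open>HZ \<le> HD\<close> \<open>HX \<le> HD\<close> ruzsa unfolding L_def[symmetric] HZ_def[symmetric] by linarith
  qed
qed

section \<open>Bhattacharyya coefficient and relative entropy\<close>

definition bhattacharyya :: "'b set \<Rightarrow> ('b \<Rightarrow> real) \<Rightarrow> ('b \<Rightarrow> real) \<Rightarrow> real" where
  "bhattacharyya T f g = (\<Sum>z\<in>T. sqrt (f z * g z))"

lemma bhattacharyya_le:
  assumes "\<And>z. z \<in> T \<Longrightarrow> 0 \<le> f z" "\<And>z. z \<in> T \<Longrightarrow> 0 \<le> g z"
  shows "bhattacharyya T f g \<le> (sum f T + sum g T) / 2"
proof -
  have "bhattacharyya T f g \<le> (\<Sum>z\<in>T. (f z + g z) / 2)"
    unfolding bhattacharyya_def by (rule sum_mono) (use assms arith_geo_mean_sqrt in auto)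
  then show ?thesis by (simp add: sum.distrib sum_divide_distrib[symmetric])
qed

lemma bhattacharyya_triangle:
  assumes "\<And>z. z \<in> T \<Longrightarrow> 0 \<le> f z" "\<And>z. z \<in> T \<Longrightarrow> 0 \<le> g z" "\<And>z. z \<in> T \<Longrightarrow> 0 \<le> w z"
    and "sum f T = 1" "sum g T = 1" "sum w T = 1"
  shows "1 - bhattacharyya T f g \<le> 2 * (1 - bhattacharyya T f w) + 2 * (1 - bhattacharyya T g w)"
proof -
  have "(\<Sum>z\<in>T. f z + g z - 2 * sqrt (f z * g z))
      \<le> (\<Sum>z\<in>T. 2 * (f z + w z - 2 * sqrt (f z * w z)) + 2 * (g z + w z - 2 * sqrt (g z * w z)))"
  proof (rule sum_mono)
    fix z assume "z \<in> T"
    define a b c where "a = sqrt (f z)" and "b = sqrt (g z)" and "c = sqrt (w z)"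
    have "f z = a\<^sup>2" "g z = b\<^sup>2" "w z = c\<^sup>2"
      unfolding a_def b_def c_def using assms \<open>z \<in> T\<close> by simp_all
    moreover have "0 \<le> (a + b - 2 * c)\<^sup>2" by simp
    ultimately show "f z + g z - 2 * sqrt (f z * g z)
        \<le> 2 * (f z + w z - 2 * sqrt (f z * w z)) + 2 * (g z + w z - 2 * sqrt (g z * w z))"
      unfolding real_sqrt_mult a_def[symmetric] b_def[symmetric] c_def[symmetric]
      by (simp add: power2_eq_square algebra_simps)
  qed
  then show ?thesis
    using assms(4-6) unfolding bhattacharyya_def
    by (simp add: sum.distrib sum_subtractf sum_distrib_left[symmetric])
qed

lemma relative_entropy_ge_bhattacharyya:
  assumes "\<And>z. z \<in> T \<Longrightarrow> 0 \<le> f z" "\<And>z. z \<in> T \<Longrightarrow> 0 \<le> w z"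
    and "\<And>z. z \<in> T \<Longrightarrow> 0 < f z \<Longrightarrow> 0 < w z"
  shows "2 * (sum f T - bhattacharyya T f w) \<le> (\<Sum>z\<in>T. f z * ln (f z / w z))"
proof -
  have "2 * (f z - sqrt (f z * w z)) \<le> f z * ln (f z / w z)" if "z \<in> T" for z
  proof (cases "f z = 0")
    case False
    with that assms have "0 < f z" "0 < w z" by force+
    define s u where "s = sqrt (f z)" and "u = sqrt (w z)"
    have pos: "0 < s" "0 < u" and sq: "f z = s\<^sup>2" "w z = u\<^sup>2"
      unfolding s_def u_def using \<open>0 < f z\<close> \<open>0 < w z\<close> by simp_all
    have "ln (u / s) \<le> u / s - 1"
      using pos by (intro ln_le_minus_one) simp
    then have "s\<^sup>2 * ln (u / s) \<le> s\<^sup>2 * (u / s - 1)"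
      by (simp add: mult_left_mono)
    also have "\<dots> = s * u - s\<^sup>2"
      using pos by (simp add: field_simps power2_eq_square)
    finally have "s\<^sup>2 * ln (u / s) \<le> s * u - s\<^sup>2" .
    moreover have "f z * ln (f z / w z) = - 2 * (s\<^sup>2 * ln (u / s))"
      using pos sq by (simp add: ln_div ln_mult power2_eq_square algebra_simps)
    ultimately show ?thesis
      unfolding real_sqrt_mult s_def[symmetric] u_def[symmetric] using sq by simp
  qed simp
  then have "(\<Sum>z\<in>T. 2 * (f z - sqrt (f z * w z))) \<le> (\<Sum>z\<in>T. f z * ln (f z / w z))"
    by (rule sum_mono)
  then show ?thesis
    unfolding bhattacharyya_def by (simp add: sum_subtractf sum_distrib_left)
qed

lemma entropy_sum_dist_minus_entropy:
  fixes pX pY :: "'a::ab_group_add pmf"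
  assumes fin_X: "finite (set_pmf pX)" and fin_Y: "finite (set_pmf pY)"
  defines "T \<equiv> set_pmf (sum_dist pX pY)"
  shows "entropy_pmf (sum_dist pX pY) - entropy_pmf pY
    = (\<Sum>x\<in>set_pmf pX. pmf pX x *
         (\<Sum>z\<in>T. pmf pY (z - x) * ln (pmf pY (z - x) / pmf (sum_dist pX pY) z)))"
proof -
  define f where "f x z = pmf pY (z - x)" for x z
  define w where "w = pmf (sum_dist pX pY)"
  have "entropy_pmf (sum_dist pX pY) = (\<Sum>z\<in>T. \<Sum>x\<in>set_pmf pX. pmf pX x * (f x z * ln (1 / w z)))"
    unfolding entropy_pmf_def T_def w_def f_def
    by (rule sum.cong[OF refl]) (simp add: pmf_sum_dist[OF fin_X] sum_distrib_right mult.assoc)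
  also have "\<dots> = (\<Sum>x\<in>set_pmf pX. pmf pX x * (\<Sum>z\<in>T. f x z * ln (1 / w z)))"
    by (subst sum.swap) (simp add: sum_distrib_left)
  finally have H_sum: "entropy_pmf (sum_dist pX pY) = \<dots>" .
  have "(\<Sum>z\<in>T. f x z * ln (1 / f x z)) = entropy_pmf pY" if "x \<in> set_pmf pX" for x
    unfolding f_def T_def entropy_pmf_def
    by (rule sum_sum_dist_translate) (use fin_X fin_Y that in \<open>auto simp: set_pmf_iff\<close>)
  then have H_Y: "entropy_pmf pY = (\<Sum>x\<in>set_pmf pX. pmf pX x * (\<Sum>z\<in>T. f x z * ln (1 / f x z)))"
    using sum_pmf_eq_1[OF fin_X] by (simp add: sum_distrib_right[symmetric])
  have log_ratio: "f x z * ln (1 / w z) - f x z * ln (1 / f x z) = f x z * ln (f x z / w z)"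
    if "x \<in> set_pmf pX" for x z
  proof (cases "f x z = 0")
    case False
    then have "0 < f x z" by (simp add: f_def order_less_le)
    moreover from this have "0 < w z"
      unfolding f_def w_def using pmf_sum_dist_pos[OF that] by blast
    ultimately show ?thesis by (simp add: ln_div algebra_simps)
  qed simp
  have "entropy_pmf (sum_dist pX pY) - entropy_pmf pY
      = (\<Sum>x\<in>set_pmf pX. pmf pX x * (\<Sum>z\<in>T. f x z * ln (1 / w z) - f x z * ln (1 / f x z)))"
    unfolding H_sum H_Y by (simp add: sum_subtractf right_diff_distrib)
  also have "\<dots> = (\<Sum>x\<in>set_pmf pX. pmf pX x * (\<Sum>z\<in>T. f x z * ln (f x z / w z)))"
    by (rule sum.cong[OF refl]) (simp add: log_ratio)
  finally show ?thesis unfolding f_def w_def .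
qed

lemma markov_sum:
  fixes p \<phi> :: "'b \<Rightarrow> real"
  assumes "finite A" "\<And>x. x \<in> A \<Longrightarrow> 0 \<le> p x" "\<And>x. x \<in> A \<Longrightarrow> 0 \<le> \<phi> x"
  shows "t * sum p {x\<in>A. t < \<phi> x} \<le> (\<Sum>x\<in>A. p x * \<phi> x)"
proof -
  have "t * sum p {x\<in>A. t < \<phi> x} = (\<Sum>x\<in>{x\<in>A. t < \<phi> x}. p x * t)"
    by (simp add: sum_distrib_left mult.commute)
  also have "\<dots> \<le> (\<Sum>x\<in>{x\<in>A. t < \<phi> x}. p x * \<phi> x)"
    by (rule sum_mono) (use assms in \<open>auto intro: mult_left_mono\<close>)
  also have "\<dots> \<le> (\<Sum>x\<in>A. p x * \<phi> x)"
    by (rule sum_mono2) (use assms in auto)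
  finally show ?thesis .
qed

lemma mean_bhattacharyya_defect_le:
  fixes pX pY :: "'a::ab_group_add pmf"
  assumes fin_X: "finite (set_pmf pX)" and fin_Y: "finite (set_pmf pY)"
  defines "T \<equiv> set_pmf (sum_dist pX pY)"
  shows "(\<Sum>x\<in>set_pmf pX. pmf pX x *
           (1 - bhattacharyya T (\<lambda>z. pmf pY (z - x)) (pmf (sum_dist pX pY))))
    \<le> (entropy_pmf (sum_dist pX pY) - entropy_pmf pY) / 2"
proof -
  define f where "f x z = pmf pY (z - x)" for x z
  define w where "w = pmf (sum_dist pX pY)"
  have "2 * (\<Sum>x\<in>set_pmf pX. pmf pX x * (1 - bhattacharyya T (f x) w))
      = (\<Sum>x\<in>set_pmf pX. pmf pX x * (2 * (1 - bhattacharyya T (f x) w)))"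
    by (simp only: sum_distrib_left mult.left_commute)
  also have "\<dots> \<le> (\<Sum>x\<in>set_pmf pX. pmf pX x * (\<Sum>z\<in>T. f x z * ln (f x z / w z)))"
  proof (intro sum_mono mult_left_mono)
    fix x assume x: "x \<in> set_pmf pX"
    have "2 * (sum (f x) T - bhattacharyya T (f x) w) \<le> (\<Sum>z\<in>T. f x z * ln (f x z / w z))"
      by (rule relative_entropy_ge_bhattacharyya)
        (use pmf_sum_dist_pos[OF x] in \<open>auto simp: f_def w_def\<close>)
    then show "2 * (1 - bhattacharyya T (f x) w) \<le> (\<Sum>z\<in>T. f x z * ln (f x z / w z))"
      using sum_pmf_translate_eq_1[OF fin_Y finite_set_pmf_sum_dist[OF fin_X fin_Y]
          add_mem_set_pmf_sum_dist[OF x]]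
      unfolding f_def T_def by simp
  qed simp
  also have "\<dots> = entropy_pmf (sum_dist pX pY) - entropy_pmf pY"
    using entropy_sum_dist_minus_entropy[OF fin_X fin_Y] unfolding f_def w_def T_def by simp
  finally show ?thesis unfolding f_def w_def by simp
qed

lemma exists_half_mass_bhattacharyya_ge:
  fixes pX pY :: "'a::ab_group_add pmf"
  assumes fin_X: "finite (set_pmf pX)" and fin_Y: "finite (set_pmf pY)"
    and small: "entropy_pmf (sum_dist pX pY) - entropy_pmf pY \<le> 1 / 16"
  defines "T \<equiv> set_pmf (sum_dist pX pY)"
  obtains S where "S \<subseteq> set_pmf pX" and "1 / 2 \<le> sum (pmf pX) S"
    and "\<And>x x'. x \<in> S \<Longrightarrow> x' \<in> S \<Longrightarrow>
           3 / 4 \<le> bhattacharyya T (\<lambda>z. pmf pY (z - x)) (\<lambda>z. pmf pY (z - x'))"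
proof -
  define f where "f x z = pmf pY (z - x)" for x z
  define w where "w = pmf (sum_dist pX pY)"
  define \<delta> where "\<delta> x = 1 - bhattacharyya T (f x) w" for x
  have mass_f: "sum (f x) T = 1" if "x \<in> set_pmf pX" for x
    unfolding f_def T_def
    by (rule sum_pmf_translate_eq_1[OF fin_Y finite_set_pmf_sum_dist[OF fin_X fin_Y]
          add_mem_set_pmf_sum_dist[OF that]])
  have mass_w: "sum w T = 1"
    unfolding w_def T_def by (rule sum_pmf_eq_1) (use finite_set_pmf_sum_dist fin_X fin_Y in auto)
  have \<delta>_nonneg: "0 \<le> \<delta> x" if "x \<in> set_pmf pX" for x
    using bhattacharyya_le[of T "f x" w] mass_f[OF that] mass_w
    unfolding \<delta>_def f_def w_def by simp
  have mean: "(\<Sum>x\<in>set_pmf pX. pmf pX x * \<delta> x) \<le> 1 / 32"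
    using mean_bhattacharyya_defect_le[OF fin_X fin_Y] small
    unfolding \<delta>_def f_def w_def T_def by simp
  define S where "S = {x \<in> set_pmf pX. \<delta> x \<le> 1 / 16}"
  have S: "S \<subseteq> set_pmf pX" unfolding S_def by auto
  have "set_pmf pX - S = {x \<in> set_pmf pX. 1 / 16 < \<delta> x}" unfolding S_def by auto
  then have "sum (pmf pX) (set_pmf pX - S) \<le> 1 / 2"
    using markov_sum[OF fin_X, of "pmf pX" \<delta> "1 / 16"] \<delta>_nonneg mean by simp
  then have "1 / 2 \<le> sum (pmf pX) S"
    using sum.subset_diff[OF S fin_X, of "pmf pX"] sum_pmf_eq_1[OF fin_X] by simp
  moreover have "3 / 4 \<le> bhattacharyya T (f x) (f x')" if "x \<in> S" "x' \<in> S" for x x'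
  proof -
    have "x \<in> set_pmf pX" "x' \<in> set_pmf pX" "\<delta> x \<le> 1 / 16" "\<delta> x' \<le> 1 / 16"
      using that unfolding S_def by auto
    then show ?thesis
      using bhattacharyya_triangle[of T "f x" "f x'" w] mass_f mass_w
      unfolding \<delta>_def f_def w_def by fastforce
  qed
  ultimately show ?thesis using that[OF S] unfolding f_def by blast
qed

section \<open>Characters and the large spectrum\<close>

lemma character_add: "\<gamma> \<in> characters \<Longrightarrow> \<gamma> (x + y) = \<gamma> x * \<gamma> y"
  by (simp add: characters_def)

lemma character_norm: "\<gamma> \<in> characters \<Longrightarrow> cmod (\<gamma> x) = 1"
  by (simp add: characters_def)

lemma character_mult_cnj: "\<gamma> \<in> characters \<Longrightarrow> \<gamma> x * cnj (\<gamma> x) = 1"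
  using complex_norm_square[of "\<gamma> x"] character_norm[of \<gamma> x] by simp

lemma character_diff_norm:
  assumes "\<gamma> \<in> characters"
  shows "cmod (\<gamma> (x - y) - 1) = cmod (\<gamma> x - \<gamma> y)"
proof -
  have "\<gamma> x - \<gamma> y = \<gamma> y * (\<gamma> (x - y) - 1)"
    using character_add[OF assms, of "x - y" y] by (simp add: algebra_simps)
  then show ?thesis by (simp add: norm_mult character_norm[OF assms])
qed

lemma diff_mem_bohr_set:
  assumes "\<Gamma> \<subseteq> characters" and "\<And>\<gamma>. \<gamma> \<in> \<Gamma> \<Longrightarrow> cmod (\<gamma> x - \<gamma> x') \<le> \<delta>"
  shows "x - x' \<in> bohr_set \<Gamma> \<delta>"
  unfolding bohr_set_def using assms character_diff_norm[of _ x x'] by auto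

lemma LSpec_subset_characters: "LSpec p \<epsilon> \<subseteq> characters"
  by (auto simp: LSpec_def)

lemma fourier_variance:
  fixes pY :: "'a::ab_group_add pmf"
  assumes fin_Y: "finite (set_pmf pY)" and \<gamma>: "\<gamma> \<in> characters"
  shows "(\<Sum>y\<in>set_pmf pY. pmf pY y * (cmod (cnj (fourier_pmf pY \<gamma>) - \<gamma> y))\<^sup>2)
    = 1 - (cmod (fourier_pmf pY \<gamma>))\<^sup>2"
proof -
  define \<phi> \<theta> where "\<phi> = fourier_pmf pY \<gamma>" and "\<theta> = cnj \<phi>"
  define p where "p y = complex_of_real (pmf pY y)" for y
  have mass: "(\<Sum>y\<in>set_pmf pY. p y) = 1"
    unfolding p_def using sum_pmf_eq_1[OF fin_Y] by (metis of_real_1 of_real_sum order_refl)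
  have \<phi>: "\<phi> = (\<Sum>y\<in>set_pmf pY. p y * cnj (\<gamma> y))"
    unfolding \<phi>_def fourier_pmf_def p_def ..
  have cnj_p: "cnj (p y) = p y" for y
    by (simp add: p_def)
  from \<phi> have cnj_\<phi>: "cnj \<phi> = (\<Sum>y\<in>set_pmf pY. p y * \<gamma> y)"
    by (simp add: cnj_p)
  have "complex_of_real (\<Sum>y\<in>set_pmf pY. pmf pY y * (cmod (\<theta> - \<gamma> y))\<^sup>2)
      = (\<Sum>y\<in>set_pmf pY. p y * ((\<theta> - \<gamma> y) * cnj (\<theta> - \<gamma> y)))"
    by (simp only: of_real_sum of_real_mult complex_norm_square p_def)
  also have "\<dots> = (\<Sum>y\<in>set_pmf pY.
      p y * (\<theta> * cnj \<theta>) - \<theta> * (p y * cnj (\<gamma> y)) - cnj \<theta> * (p y * \<gamma> y) + p y)"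
    using character_mult_cnj[OF \<gamma>] by (intro sum.cong refl) (simp add: algebra_simps)
  also have "\<dots> = (\<theta> * cnj \<theta>) * (\<Sum>y\<in>set_pmf pY. p y) - \<theta> * \<phi> - cnj \<theta> * cnj \<phi>
      + (\<Sum>y\<in>set_pmf pY. p y)"
    unfolding \<phi> cnj_\<phi>
    by (simp add: cnj_p sum.distrib sum_subtractf sum_distrib_left sum_distrib_right mult.commute)
  also have "\<dots> = 1 - \<phi> * cnj \<phi>"
    unfolding mass \<theta>_def by (simp add: algebra_simps)
  also have "\<dots> = complex_of_real (1 - (cmod \<phi>)\<^sup>2)"
    by (simp only: of_real_diff of_real_1 complex_norm_square)
  finally show ?thesis unfolding \<theta>_def \<phi>_def of_real_eq_iff .
qed

lemma sum_sqrt_mult_le: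
  assumes "\<And>z. z \<in> T \<Longrightarrow> 0 \<le> f z" "\<And>z. z \<in> T \<Longrightarrow> 0 \<le> h z"
  shows "(\<Sum>z\<in>T. sqrt (f z * h z) * a z) \<le> sqrt ((\<Sum>z\<in>T. f z * (a z)\<^sup>2) * sum h T)"
proof (rule real_le_rsqrt)
  have "(\<Sum>z\<in>T. sqrt (f z * h z) * a z) = (\<Sum>z\<in>T. (sqrt (f z) * a z) * sqrt (h z))"
    by (simp add: real_sqrt_mult mult_ac)
  then have "(\<Sum>z\<in>T. sqrt (f z * h z) * a z)\<^sup>2
      \<le> (\<Sum>z\<in>T. (sqrt (f z) * a z)\<^sup>2) * (\<Sum>z\<in>T. (sqrt (h z))\<^sup>2)"
    by (simp only: Cauchy_Schwarz_ineq_sum)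
  also have "\<dots> = (\<Sum>z\<in>T. f z * (a z)\<^sup>2) * sum h T"
    using assms by (simp add: power_mult_distrib)
  finally show "(\<Sum>z\<in>T. sqrt (f z * h z) * a z)\<^sup>2 \<le> (\<Sum>z\<in>T. f z * (a z)\<^sup>2) * sum h T" .
qed

lemma fourier_variance_translate:
  fixes pY :: "'a::ab_group_add pmf"
  assumes fin_Y: "finite (set_pmf pY)" and \<gamma>: "\<gamma> \<in> characters" and fin_T: "finite T"
    and T: "\<And>y. y \<in> set_pmf pY \<Longrightarrow> x + y \<in> T"
  shows "(\<Sum>z\<in>T. pmf pY (z - x) * (cmod (cnj (fourier_pmf pY \<gamma>) - \<gamma> (z - x)))\<^sup>2)
    = 1 - (cmod (fourier_pmf pY \<gamma>))\<^sup>2"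
  using fourier_variance[OF fin_Y \<gamma>]
  by (subst sum_translate_support[where B="set_pmf pY"])
    (use fin_T fin_Y T in \<open>auto simp: set_pmf_iff\<close>)

lemma character_diff_le_deviations:
  assumes \<gamma>: "\<gamma> \<in> characters"
  shows "cmod \<theta> * cmod (\<gamma> x - \<gamma> x') \<le> cmod (\<theta> - \<gamma> (z - x)) + cmod (\<theta> - \<gamma> (z - x'))"
proof -
  have "\<theta> * (\<gamma> x - \<gamma> x') = \<gamma> x * (\<theta> - \<gamma> (z - x)) - \<gamma> x' * (\<theta> - \<gamma> (z - x'))"
    using character_add[OF \<gamma>, of x "z - x"] character_add[OF \<gamma>, of x' "z - x'"]
    by (simp add: algebra_simps)
  then have "cmod \<theta> * cmod (\<gamma> x - \<gamma> x')
      = cmod (\<gamma> x * (\<theta> - \<gamma> (z - x)) - \<gamma> x' * (\<theta> - \<gamma> (z - x')))"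
    by (metis norm_mult)
  also have "\<dots> \<le> cmod (\<theta> - \<gamma> (z - x)) + cmod (\<theta> - \<gamma> (z - x'))"
    by (rule order_trans[OF norm_triangle_ineq4]) (simp add: norm_mult character_norm[OF \<gamma>])
  finally show ?thesis .
qed

text \<open>Averaging character_diff_le_deviations against sqrt (f_x f_x') with
  \<theta> = cnj (fourier_pmf pY \<gamma>), and applying Cauchy-Schwarz to each term, bounds
  |\<gamma> x - \<gamma> x'| by the standard deviation of \<gamma>(Y) around \<theta>.\<close>
lemma character_diff_bhattacharyya_le:
  fixes pY :: "'a::ab_group_add pmf"
  assumes fin_Y: "finite (set_pmf pY)" and \<gamma>: "\<gamma> \<in> characters" and fin_T: "finite T"
    and T: "\<And>y. y \<in> set_pmf pY \<Longrightarrow> x + y \<in> T" "\<And>y. y \<in> set_pmf pY \<Longrightarrow> x' + y \<in> T"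
  shows "cmod (fourier_pmf pY \<gamma>) * cmod (\<gamma> x - \<gamma> x')
      * bhattacharyya T (\<lambda>z. pmf pY (z - x)) (\<lambda>z. pmf pY (z - x'))
    \<le> 2 * sqrt (1 - (cmod (fourier_pmf pY \<gamma>))\<^sup>2)"
proof -
  define \<phi> \<theta> where "\<phi> = fourier_pmf pY \<gamma>" and "\<theta> = cnj \<phi>"
  define f h where "f z = pmf pY (z - x)" and "h z = pmf pY (z - x')" for z
  define a b where "a z = cmod (\<theta> - \<gamma> (z - x))" and "b z = cmod (\<theta> - \<gamma> (z - x'))" for z
  define \<Delta> where "\<Delta> = cmod (\<gamma> x - \<gamma> x')"
  note sums = fourier_variance_translate[OF fin_Y \<gamma> fin_T T(1)]
    fourier_variance_translate[OF fin_Y \<gamma> fin_T T(2)]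
    sum_pmf_translate_eq_1[OF fin_Y fin_T T(1)] sum_pmf_translate_eq_1[OF fin_Y fin_T T(2)]
  have cauchy_schwarz:
    "(\<Sum>z\<in>T. sqrt (f z * h z) * a z) \<le> sqrt (1 - (cmod \<phi>)\<^sup>2)"
    "(\<Sum>z\<in>T. sqrt (h z * f z) * b z) \<le> sqrt (1 - (cmod \<phi>)\<^sup>2)"
    using sum_sqrt_mult_le[of T f h a] sum_sqrt_mult_le[of T h f b] sums
    unfolding f_def h_def a_def b_def \<theta>_def \<phi>_def by simp_all
  have "cmod \<theta> * \<Delta> * bhattacharyya T f h = (\<Sum>z\<in>T. sqrt (f z * h z) * (cmod \<theta> * \<Delta>))"
    unfolding bhattacharyya_def by (simp add: sum_distrib_left mult.commute)
  also have "\<dots> \<le> (\<Sum>z\<in>T. sqrt (f z * h z) * a z + sqrt (h z * f z) * b z)"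
  proof (rule sum_mono)
    fix z
    have "sqrt (f z * h z) * (cmod \<theta> * \<Delta>) \<le> sqrt (f z * h z) * (a z + b z)"
      unfolding \<Delta>_def a_def b_def
      by (rule mult_left_mono[OF character_diff_le_deviations[OF \<gamma>]]) (simp add: f_def h_def)
    moreover have "sqrt (h z * f z) = sqrt (f z * h z)" by (simp add: mult.commute)
    ultimately show "sqrt (f z * h z) * (cmod \<theta> * \<Delta>)
        \<le> sqrt (f z * h z) * a z + sqrt (h z * f z) * b z"
      by (metis distrib_left)
  qed
  also have "\<dots> \<le> 2 * sqrt (1 - (cmod \<phi>)\<^sup>2)"
    using cauchy_schwarz by (simp add: sum.distrib)
  finally show ?thesis unfolding \<theta>_def \<Delta>_def \<phi>_def f_def h_def by simp
qed

lemma character_diff_le_of_LSpec: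
  fixes pY :: "'a::ab_group_add pmf"
  assumes fin_Y: "finite (set_pmf pY)" and \<gamma>: "\<gamma> \<in> LSpec pY \<epsilon>" and "0 < \<epsilon>" "\<epsilon> < 1"
    and fin_T: "finite T"
    and T: "\<And>y. y \<in> set_pmf pY \<Longrightarrow> x + y \<in> T" "\<And>y. y \<in> set_pmf pY \<Longrightarrow> x' + y \<in> T"
    and overlap: "3 / 4 \<le> bhattacharyya T (\<lambda>z. pmf pY (z - x)) (\<lambda>z. pmf pY (z - x'))"
  shows "cmod (\<gamma> x - \<gamma> x') \<le> 4 * \<epsilon>"
proof -
  define c \<Delta> B where "c = cmod (fourier_pmf pY \<gamma>)" and "\<Delta> = cmod (\<gamma> x - \<gamma> x')"
    and "B = bhattacharyya T (\<lambda>z. pmf pY (z - x)) (\<lambda>z. pmf pY (z - x'))"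
  have "\<gamma> \<in> characters" and spec: "1 - \<epsilon>\<^sup>2 / 2 \<le> c\<^sup>2"
    using \<gamma> unfolding LSpec_def c_def by auto
  have bound: "c * \<Delta> * B \<le> 2 * sqrt (1 - c\<^sup>2)"
    unfolding c_def \<Delta>_def B_def
    using character_diff_bhattacharyya_le[OF fin_Y \<open>\<gamma> \<in> characters\<close> fin_T T] .
  have "0 \<le> c * \<Delta> * B"
    using overlap unfolding c_def \<Delta>_def B_def by simp
  with bound have "0 \<le> sqrt (1 - c\<^sup>2)" by linarith
  then have "0 \<le> 1 - c\<^sup>2" by simp
  have "\<epsilon>\<^sup>2 \<le> 1"
    using assms(3,4) by (simp add: power_le_one)
  with spec have "1 / 2 \<le> c\<^sup>2" by linarith
  moreover have "9 / 16 \<le> B\<^sup>2"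
    using power_mono[OF overlap, of 2] unfolding B_def by (simp add: power2_eq_square)
  ultimately have "1 / 2 * (9 / 16) \<le> c\<^sup>2 * B\<^sup>2"
    by (rule mult_mono) simp_all
  then have "9 / 32 \<le> c\<^sup>2 * B\<^sup>2" by simp
  then have "9 / 32 * \<Delta>\<^sup>2 \<le> c\<^sup>2 * B\<^sup>2 * \<Delta>\<^sup>2"
    by (rule mult_right_mono) simp
  also have "\<dots> = (c * \<Delta> * B)\<^sup>2"
    by (simp add: power_mult_distrib)
  also have "\<dots> \<le> (2 * sqrt (1 - c\<^sup>2))\<^sup>2"
    using bound \<open>0 \<le> c * \<Delta> * B\<close> by (rule power_mono)
  also have "\<dots> = 4 * (1 - c\<^sup>2)"
    using \<open>0 \<le> 1 - c\<^sup>2\<close> by (simp add: power_mult_distrib)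
  also have "\<dots> = 4 - 4 * c\<^sup>2"
    by (simp add: right_diff_distrib)
  finally have "9 / 32 * \<Delta>\<^sup>2 \<le> 4 - 4 * c\<^sup>2" .
  then have "\<Delta>\<^sup>2 \<le> 16 * \<epsilon>\<^sup>2"
    using spec zero_le_power2[of \<epsilon>] by linarith
  then have "\<Delta>\<^sup>2 \<le> (4 * \<epsilon>)\<^sup>2"
    by (simp add: power_mult_distrib)
  then have "\<Delta> \<le> 4 * \<epsilon>"
    by (rule power2_le_imp_le) (use assms(3) in simp)
  then show ?thesis unfolding \<Delta>_def .
qed

theorem proposition4p2:
  fixes pX pY pZ :: "'a::ab_group_add pmf" and \<epsilon> :: real
  assumes "finite (set_pmf pX)" and "finite (set_pmf pY)" and "finite (set_pmf pZ)"
    and "entropy_pmf (sum_dist pX pY) - entropy_pmf pY \<le> 1 / 16"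
    and "0 < \<epsilon>" and "\<epsilon> < 1"
  shows "\<exists>S. S \<subseteq> set_pmf pX \<and> S \<noteq> {} \<and>
           ln (real (card S)) \<ge> entropy_pmf pZ - 4 * ruzsa_dist pX pZ - 2 * ln 2 \<and>
           {s - s' | s s'. s \<in> S \<and> s' \<in> S} \<subseteq> bohr_set (LSpec pY \<epsilon>) (4 * \<epsilon>)"
proof -
  note fin_X = assms(1) and fin_Y = assms(2) and fin_Z = assms(3)
  define T where "T = set_pmf (sum_dist pX pY)"
  obtain S where S: "S \<subseteq> set_pmf pX" and half: "1 / 2 \<le> sum (pmf pX) S"
    and overlap: "\<And>x x'. x \<in> S \<Longrightarrow> x' \<in> S \<Longrightarrow>
        3 / 4 \<le> bhattacharyya T (\<lambda>z. pmf pY (z - x)) (\<lambda>z. pmf pY (z - x'))"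
    using exists_half_mass_bhattacharyya_ge[OF fin_X fin_Y assms(4)] unfolding T_def by blast
  have "s - s' \<in> bohr_set (LSpec pY \<epsilon>) (4 * \<epsilon>)" if "s \<in> S" "s' \<in> S" for s s'
  proof (rule diff_mem_bohr_set[OF LSpec_subset_characters])
    fix \<gamma> assume "\<gamma> \<in> LSpec pY \<epsilon>"
    show "cmod (\<gamma> s - \<gamma> s') \<le> 4 * \<epsilon>"
      by (rule character_diff_le_of_LSpec[OF fin_Y \<open>\<gamma> \<in> LSpec pY \<epsilon>\<close> assms(5,6) _ _ _
            overlap[OF that]])
        (use that S fin_X fin_Y in
          \<open>auto simp: T_def intro: finite_set_pmf_sum_dist add_mem_set_pmf_sum_dist\<close>)
  qed
  moreover have "S \<noteq> {}" using half by auto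
  ultimately show ?thesis
    using S ln_card_ge_of_half_mass[OF fin_X fin_Z S half] by blast
qed

end
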